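(* Let $p(n)$ be the number of (unrestricted) partitions of $n$. For $k\ge1$ let $\Omega_k(j)$ ($j\ge0$) be the coefficients of $A_k(q)=\dfrac{(1-q^k)^k}{\prod_{i=1}^{k}(1-q^i)}=\sum_{j\ge0}\Omega_k(j)q^j$, and for $n\ge 1$ put $n_k=n-k$ and $$\Phi_k(n)=\sum_{m=0}^{\lfloor n_k/k\rfloor}\Omega_k(n_k-mk)\binom{m+k-1}{k-1}$$ (an empty sum, hence $0$, when $n_k<0$). Then for every integer $n\ge1$, $$p(n)=\sum_{k=1}^{n}\Phi_k(n).$$ *)

theory Defs
  imports Complex_Main "HOL-Library.Multiset" "HOL-Computational_Algebra.Formal_Power_Series"
begin

definition partition_count :: "nat \<Rightarrow> nat" where
  "partition_count n = card {M :: nat multiset. (\<forall>x\<in>#M. 0 < x) \<and> sum_mset M = n}"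

definition A_fps :: "nat \<Rightarrow> rat fps" where
  "A_fps k = (1 - fps_X ^ k) ^ k * inverse (\<Prod>i\<in>{1..k}. (1 - fps_X ^ i))"

definition Omega :: "nat \<Rightarrow> nat \<Rightarrow> rat" where
  "Omega k j = fps_nth (A_fps k) j"

definition Phi :: "nat \<Rightarrow> nat \<Rightarrow> rat" where
  "Phi k n = (if n < k then 0 else
     (\<Sum>m = 0..(n - k) div k. Omega k (n - k - m * k) * of_nat ((m + k - 1) choose (k - 1))))"

end

theory Submission
  imports Defs
begin

(* Let B_k = 1 / prod_{i=1..k} (1 - q^i), the generating function of partitions into parts
   of size at most k. Since 1 / (1 - q^k)^k = sum_m binom(m+k-1, k-1) q^(mk), we have
   B_k = A_k / (1 - q^k)^k, and comparing coefficients shows that Phi_k(n) is the coefficient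
   of q^(n-k) in B_k. From B_k (1 - q^k) = B_(k-1) that coefficient equals
   [q^n] B_k - [q^n] B_(k-1), the number of partitions of n with largest part exactly k,
   and the sum over k telescopes to [q^n] B_n = p(n). *)

definition bounded_partitions :: "nat \<Rightarrow> nat \<Rightarrow> nat multiset set" where
  "bounded_partitions k n = {M. (\<forall>x\<in>#M. 0 < x \<and> x \<le> k) \<and> sum_mset M = n}"

lemma size_le_sum_mset_pos:
  "(\<forall>x\<in>#M. 0 < (x::nat)) \<Longrightarrow> size M \<le> sum_mset M"
  by (induction M) auto

lemma finite_bounded_partitions: "finite (bounded_partitions k n)"
proof (rule finite_subset)
  show "bounded_partitions k n \<subseteq> (\<Union>s\<le>n. multisets_of_size {1..k} s)"
    using size_le_sum_mset_pos
    by (fastforce simp: bounded_partitions_def multisets_of_size_def Suc_le_eq)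
qed auto

lemma bounded_partitions_0: "bounded_partitions 0 n = (if n = 0 then {{#}} else {})"
proof -
  have "M \<in> bounded_partitions 0 n \<longleftrightarrow> M = {#} \<and> n = 0" for M
    by (cases M) (auto simp: bounded_partitions_def)
  then show ?thesis by auto
qed

lemma bounded_partitions_Suc:
  "bounded_partitions (Suc k) n = bounded_partitions k n \<union>
     (if Suc k \<le> n then add_mset (Suc k) ` bounded_partitions (Suc k) (n - Suc k) else {})"
proof (intro equalityI subsetI)
  fix M assume M: "M \<in> bounded_partitions (Suc k) n"
  show "M \<in> bounded_partitions k n \<union>
     (if Suc k \<le> n then add_mset (Suc k) ` bounded_partitions (Suc k) (n - Suc k) else {})"
  proof (cases "Suc k \<in># M")
    case False
    then show ?thesis using M by (auto simp: bounded_partitions_def le_Suc_eq)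
  next
    case True
    then obtain N where "M = add_mset (Suc k) N" by (blast dest: multi_member_split)
    then show ?thesis using M by (auto simp: bounded_partitions_def)
  qed
qed (auto simp: bounded_partitions_def split: if_splits)

lemma card_bounded_partitions_Suc:
  "card (bounded_partitions (Suc k) n) = card (bounded_partitions k n) +
     (if Suc k \<le> n then card (bounded_partitions (Suc k) (n - Suc k)) else 0)"
proof -
  let ?new = "add_mset (Suc k) ` bounded_partitions (Suc k) (n - Suc k)"
  have "Suc k \<notin># M" if "M \<in> bounded_partitions k n" for M
    using that by (fastforce simp: bounded_partitions_def)
  then have "bounded_partitions k n \<inter> ?new = {}"
    by fastforce
  moreover have "card ?new = card (bounded_partitions (Suc k) (n - Suc k))"
    by (rule card_image) (simp add: inj_on_def)
  ultimately show ?thesis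
    by (subst bounded_partitions_Suc) (simp add: card_Un_disjoint finite_bounded_partitions)
qed

lemma partition_count_eq_card_bounded_partitions:
  "partition_count n = card (bounded_partitions n n)"
proof -
  have "x \<le> sum_mset M" if "x \<in># M" for x :: nat and M
    using that by (auto dest: multi_member_split)
  then have "{M. (\<forall>x\<in>#M. 0 < x) \<and> sum_mset M = n} = bounded_partitions n n"
    by (auto simp: bounded_partitions_def)
  then show ?thesis
    by (simp add: partition_count_def)
qed

lemma fps_nth_mult_one_minus_X_power:
  fixes f :: "'a::comm_ring_1 fps"
  shows "fps_nth (f * (1 - fps_X ^ d)) n = fps_nth f n - (if n < d then 0 else fps_nth f (n - d))"
  by (simp only: right_diff_distrib mult_1_right fps_sub_nth fps_X_power_mult_right_nth)

definition bounded_partitions_fps :: "nat \<Rightarrow> 'a::field fps" where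
  "bounded_partitions_fps k = inverse (\<Prod>i\<in>{1..k}. 1 - fps_X ^ i)"

lemma bounded_partitions_fps_Suc_mult:
  "bounded_partitions_fps (Suc k) * (1 - fps_X ^ Suc k) = bounded_partitions_fps k"
proof -
  have "inverse (1 - fps_X ^ Suc k) * (1 - fps_X ^ Suc k) = (1 :: 'a fps)"
    by (rule inverse_mult_eq_1) simp
  then show ?thesis
    by (simp add: bounded_partitions_fps_def prod.nat_ivl_Suc' fps_inverse_mult mult.assoc
        del: power_Suc)
qed

lemma fps_nth_bounded_partitions_fps_Suc:
  "fps_nth (bounded_partitions_fps (Suc k) :: 'a::field fps) n =
     fps_nth (bounded_partitions_fps k) n +
     (if Suc k \<le> n then fps_nth (bounded_partitions_fps (Suc k)) (n - Suc k) else 0)"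
  using fps_nth_mult_one_minus_X_power[of "bounded_partitions_fps (Suc k) :: 'a fps" "Suc k" n]
  unfolding bounded_partitions_fps_Suc_mult by (auto simp: algebra_simps)

lemma fps_nth_bounded_partitions_fps:
  "fps_nth (bounded_partitions_fps k :: 'a::field fps) n = of_nat (card (bounded_partitions k n))"
proof (induction k arbitrary: n)
  case 0
  show ?case by (simp add: bounded_partitions_fps_def bounded_partitions_0)
next
  case (Suc k)
  show ?case
  proof (induction n rule: less_induct)
    case (less n)
    then show ?case
      using Suc.IH
      by (simp add: fps_nth_bounded_partitions_fps_Suc card_bounded_partitions_Suc)
  qed
qed

definition negbinomial_fps :: "nat \<Rightarrow> nat \<Rightarrow> 'a::comm_ring_1 fps" where
  "negbinomial_fps d r = Abs_fps (\<lambda>i. if d dvd i then of_nat (i div d + r choose r) else 0)"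

lemma negbinomial_fps_Suc_mult:
  assumes "d > 0"
  shows "negbinomial_fps d (Suc r) * (1 - fps_X ^ d) = negbinomial_fps d r"
proof (rule fps_ext)
  fix i
  show "fps_nth (negbinomial_fps d (Suc r) * (1 - fps_X ^ d)) i = fps_nth (negbinomial_fps d r) i"
  proof (cases "d dvd i \<and> d \<le> i")
    case True
    then obtain q where "i = q * d" "q \<noteq> 0"
      using assms by (auto elim!: dvdE)
    then obtain m where m: "i = Suc m * d"
      by (cases q) auto
    have "i - d = m * d"
      using m by simp
    moreover have "(Suc m + Suc r choose Suc r) = (Suc m + r choose r) + (m + Suc r choose Suc r)"
      by simp
    ultimately show ?thesis
      using assms m by (simp add: fps_nth_mult_one_minus_X_power negbinomial_fps_def)
  next
    case False
    then show ?thesis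
      using assms
      by (auto simp: fps_nth_mult_one_minus_X_power negbinomial_fps_def dvd_minus_self binomial_eq_0)
  qed
qed

lemma negbinomial_fps_mult_power:
  assumes "d > 0"
  shows "negbinomial_fps d r * (1 - fps_X ^ d) ^ Suc r = 1"
proof (induction r)
  case 0
  have "negbinomial_fps d 0 * (1 - fps_X ^ d) = (1 :: 'a fps)"
    using assms
    by (intro fps_ext) (auto simp: fps_nth_mult_one_minus_X_power negbinomial_fps_def dvd_minus_self)
  then show ?case by simp
next
  case (Suc r)
  have "(negbinomial_fps d (Suc r) :: 'a fps) * (1 - fps_X ^ d) ^ Suc (Suc r)
      = (negbinomial_fps d (Suc r) * (1 - fps_X ^ d)) * (1 - fps_X ^ d) ^ Suc r"
    by (simp only: power_Suc mult.assoc)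
  also have "\<dots> = negbinomial_fps d r * (1 - fps_X ^ d) ^ Suc r"
    by (simp only: negbinomial_fps_Suc_mult[OF assms])
  also have "\<dots> = 1"
    by (rule Suc.IH)
  finally show ?case .
qed

lemma fps_nth_mult_multiples_supported:
  fixes c :: "nat \<Rightarrow> 'a::comm_semiring_1"
  assumes "d > 0"
  shows "fps_nth (Abs_fps (\<lambda>i. if d dvd i then c (i div d) else 0) * f) n
           = (\<Sum>m\<le>n div d. c m * fps_nth f (n - m * d))"
proof -
  have multiples: "{i \<in> {0..n}. d dvd i} = (\<lambda>m. m * d) ` {..n div d}"
  proof (intro equalityI subsetI)
    fix i assume i: "i \<in> {i \<in> {0..n}. d dvd i}"
    then have "i = i div d * d" "i div d \<le> n div d"
      by (simp_all add: div_le_mono)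
    then show "i \<in> (\<lambda>m. m * d) ` {..n div d}"
      by blast
  qed (use assms in \<open>auto simp: less_eq_div_iff_mult_less_eq\<close>)
  have "fps_nth (Abs_fps (\<lambda>i. if d dvd i then c (i div d) else 0) * f) n
          = (\<Sum>i=0..n. if d dvd i then c (i div d) * fps_nth f (n - i) else 0)"
    by (auto simp: fps_mult_nth intro!: sum.cong)
  also have "\<dots> = (\<Sum>i\<in>{i \<in> {0..n}. d dvd i}. c (i div d) * fps_nth f (n - i))"
    by (rule sum.inter_filter[symmetric]) simp
  also have "\<dots> = (\<Sum>m\<le>n div d. c m * fps_nth f (n - m * d))"
    unfolding multiples using assms by (simp add: sum.reindex inj_on_def)
  finally show ?thesis .
qed

lemma bounded_partitions_fps_eq_A_fps:
  assumes "k > 0"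
  shows "bounded_partitions_fps k = negbinomial_fps k (k - 1) * A_fps k"
proof -
  have "negbinomial_fps k (k - 1) * (1 - fps_X ^ k) ^ k = (1 :: rat fps)"
    using negbinomial_fps_mult_power[OF assms, of "k - 1"] assms by simp
  then show ?thesis
    by (simp add: A_fps_def bounded_partitions_fps_def mult.assoc[symmetric])
qed

lemma Phi_eq_fps_nth_bounded_partitions_fps:
  assumes "0 < k" "k \<le> n"
  shows "Phi k n = fps_nth (bounded_partitions_fps k) (n - k)"
proof -
  have "fps_nth (bounded_partitions_fps k) (n - k)
          = fps_nth (negbinomial_fps k (k - 1) * A_fps k) (n - k)"
    using assms by (simp add: bounded_partitions_fps_eq_A_fps)
  also have "\<dots> = (\<Sum>m\<le>(n - k) div k.
                       of_nat (m + (k - 1) choose (k - 1)) * Omega k (n - k - m * k))"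
    unfolding negbinomial_fps_def Omega_def by (rule fps_nth_mult_multiples_supported[OF assms(1)])
  also have "\<dots> = Phi k n"
    using assms by (auto simp: Phi_def atLeast0AtMost mult.commute intro!: sum.cong)
  finally show ?thesis ..
qed

theorem theorem7p1:
  fixes n :: nat
  assumes "n \<ge> 1"
  shows "of_nat (partition_count n) = (\<Sum>k = 1..n. Phi k n)"
proof -
  let ?b = "\<lambda>k. fps_nth (bounded_partitions_fps k :: rat fps) n"
  have "Phi k n = ?b k - ?b (k - 1)" if "k \<in> {1..n}" for k
    using that fps_nth_bounded_partitions_fps_Suc[where 'a = rat, of "k - 1" n]
    by (simp add: Phi_eq_fps_nth_bounded_partitions_fps)
  then have "(\<Sum>k = 1..n. Phi k n) = ?b n - ?b 0"
    using sum_telescope''[of 0 n ?b] by simp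
  also have "\<dots> = of_nat (partition_count n)"
    using assms by (simp add: fps_nth_bounded_partitions_fps bounded_partitions_0
        partition_count_eq_card_bounded_partitions)
  finally show ?thesis by simp
qed

end
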